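(* If $\mathcal A\subseteq J_q(n)$ has $|\mathcal A|=M\ge 2$ and minimum $L^1$-distance $2\delta$, then $\psi(\mathcal A)\subseteq[q]^n$ is a code of size $M$ with insdel distance $2\delta$.
   Context: $J_q(n)=\{(a_1,\dots,a_q)\in\mathbb Z_{\ge0}^q:\ \sum_{i=1}^q a_i=n\}$. The $L^1$-distance is $d_L(\mathbf a,\mathbf b)=\sum_{i=1}^q|a_i-b_i|$; the minimum $L^1$-distance of $\mathcal A$ is the minimum over distinct pairs. The map $\psi:J_q(n)\to[q]^n$ sends $(a_1,\dots,a_q)$ to the word consisting of $a_1$ copies of $1$, followed by $a_2$ copies of $2$, ..., followed by $a_q$ copies of $q$. The insdel distance $d_I(\mathbf u,\mathbf v)$ of $\mathbf u,\mathbf v\in[q]^n$ is the minimum number of insertions and deletions transforming one into the other (equivalently $2n-2\ell_{\rm LCS}(\mathbf u,\mathbf v)$, with $\ell_{\rm LCS}$ the length of a longest common subsequence); the insdel distance of a code is the minimum over distinct codewords. *)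

theory Defs
  imports Main "HOL-Library.Sublist"
begin

text \<open>Compositions: J_q(n), vectors of q nonnegative integers (as lists, index i
  corresponds to coordinate i+1) summing to n.\<close>
definition J :: "nat \<Rightarrow> nat \<Rightarrow> nat list set" where
  "J q n = {a. length a = q \<and> sum_list a = n}"

definition dL :: "nat list \<Rightarrow> nat list \<Rightarrow> nat" where
  "dL a b = (\<Sum>i<length a. nat \<bar>int (a ! i) - int (b ! i)\<bar>)"

definition min_dL :: "nat list set \<Rightarrow> nat" where
  "min_dL A = Min {dL a b | a b. a \<in> A \<and> b \<in> A \<and> a \<noteq> b}"

definition psi :: "nat list \<Rightarrow> nat list" where
  "psi a = concat (map (\<lambda>i. replicate (a ! i) (i + 1)) [0..<length a])"

definition lcs_len :: "'a list \<Rightarrow> 'a list \<Rightarrow> nat" where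
  "lcs_len u v = Max {length w | w. subseq w u \<and> subseq w v}"

definition dI :: "'a list \<Rightarrow> 'a list \<Rightarrow> nat" where
  "dI u v = length u + length v - 2 * lcs_len u v"

definition min_dI :: "'a list set \<Rightarrow> nat" where
  "min_dI C = Min {dI u v | u v. u \<in> C \<and> v \<in> C \<and> u \<noteq> v}"

end

theory Submission
  imports Defs
begin

text \<open>Since \<open>psi a\<close> is the sorted word \<open>1^a\<^sub>1 2^a\<^sub>2 \<dots> q^a\<^sub>q\<close>, a common subsequence
  of \<open>psi a\<close> and \<open>psi b\<close> contains the letter \<open>i\<close> at most \<open>min a\<^sub>i b\<^sub>i\<close> times, and
  \<open>psi (min a b)\<close> attains this bound. Hence the LCS has length \<open>\<Sum> min a\<^sub>i b\<^sub>i\<close> and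
  \<open>dI (psi a) (psi b) = \<Sum> (a\<^sub>i + b\<^sub>i - 2 min a\<^sub>i b\<^sub>i) = dL a b\<close>, so \<open>psi\<close> is an isometry;
  it is injective because \<open>a\<^sub>i\<close> is the number of occurrences of \<open>i\<close> in \<open>psi a\<close>.\<close>

lemma count_list_le_subseq: "subseq w u \<Longrightarrow> count_list w x \<le> count_list u x"
  unfolding count_list_eq_length_filter by (rule list_emb_length, rule subseq_filter)

lemma subseq_replicate: "m \<le> k \<Longrightarrow> subseq (replicate m x) (replicate k x)"
  by (metis le_add_diff_inverse replicate_add subseq_order.refl subseq_rev_drop_many)

lemma set_mono_subseq: "subseq xs ys \<Longrightarrow> set xs \<subseteq> set ys"
  by (induction rule: list_emb.induct) auto

lemma psi_Nil [simp]: "psi [] = []"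
  by (simp add: psi_def)

lemma psi_Cons [simp]: "psi (x # a) = replicate x 1 @ map Suc (psi a)"
proof -
  have "[0..<length (x # a)] = 0 # map Suc [0..<length a]"
    by (simp add: upt_conv_Cons map_Suc_upt del: upt_Suc)
  then show ?thesis
    by (simp add: psi_def map_concat o_def)
qed

lemma length_psi: "length (psi a) = sum_list a"
  by (induction a) auto

lemma set_psi: "set (psi a) \<subseteq> {1..length a}"
  by (induction a) auto

lemma count_list_psi: "i < length a \<Longrightarrow> count_list (psi a) (Suc i) = a ! i"
proof (induction a arbitrary: i)
  case (Cons x a)
  show ?case
  proof (cases i)
    case 0
    have "\<forall>y\<in>set (psi a). 0 < y" using set_psi[of a] by auto
    then show ?thesis using 0 by (simp add: count_list_eq_length_filter filter_empty_conv)
  next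
    case (Suc j)
    then show ?thesis
      using Cons by (simp add: count_list_map_conv[OF inj_Suc])
  qed
qed simp

lemma subseq_psi_mono: "list_all2 (\<le>) a b \<Longrightarrow> subseq (psi a) (psi b)"
  by (induction rule: list_all2_induct)
    (auto intro: list_emb_append_mono subseq_replicate subseq_map)

lemma length_common_subseq_psi_le:
  assumes "length a = length b" and "subseq w (psi a)" and "subseq w (psi b)"
  shows "length w \<le> sum_list (map2 min a b)"
proof -
  let ?q = "length a"
  have "set w \<subseteq> Suc ` {..<?q}"
    using set_mono_subseq[OF assms(2)] set_psi[of a] by (simp add: image_Suc_lessThan)
  then have "length w = (\<Sum>x\<in>Suc ` {..<?q}. count_list w x)"
    by (simp add: sum_count_set)
  also have "\<dots> = (\<Sum>i<?q. count_list w (Suc i))"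
    by (simp add: sum.reindex)
  also have "\<dots> \<le> (\<Sum>i<?q. min (a ! i) (b ! i))"
  proof (rule sum_mono)
    fix i assume "i \<in> {..<?q}"
    then show "count_list w (Suc i) \<le> min (a ! i) (b ! i)"
      using count_list_le_subseq[OF assms(2), of "Suc i"] count_list_le_subseq[OF assms(3), of "Suc i"]
        count_list_psi[of i a] count_list_psi[of i b] assms(1) by simp
  qed
  also have "\<dots> = sum_list (map2 min a b)"
    using assms(1) by (simp add: sum_list_sum_nth atLeast0LessThan)
  finally show ?thesis .
qed

lemma lcs_len_psi:
  assumes "length a = length b"
  shows "lcs_len (psi a) (psi b) = sum_list (map2 min a b)"
  unfolding lcs_len_def
proof (rule Max_eqI)
  show "finite {length w |w. subseq w (psi a) \<and> subseq w (psi b)}"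
    by (rule finite_subset[of _ "{..length (psi a)}"]) (auto dest: list_emb_length)
  have "list_all2 (\<le>) (map2 min a b) a" "list_all2 (\<le>) (map2 min a b) b"
    using assms by (auto simp: list_all2_conv_all_nth)
  then have "subseq (psi (map2 min a b)) (psi a) \<and> subseq (psi (map2 min a b)) (psi b)"
    by (simp add: subseq_psi_mono)
  moreover have "length (psi (map2 min a b)) = sum_list (map2 min a b)"
    by (rule length_psi)
  ultimately show "sum_list (map2 min a b) \<in> {length w |w. subseq w (psi a) \<and> subseq w (psi b)}"
    by (metis (mono_tags, lifting) mem_Collect_eq)
qed (use length_common_subseq_psi_le[OF assms] in blast)


lemma dI_psi:
  assumes "length a = length b"
  shows "dI (psi a) (psi b) = dL a b"
proof -
  let ?q = "length a"
  have "sum_list (map2 min a b) = (\<Sum>i<?q. min (a ! i) (b ! i))"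
    using assms by (simp add: sum_list_sum_nth atLeast0LessThan)
  then have "dL a b + 2 * sum_list (map2 min a b)
      = (\<Sum>i<?q. nat \<bar>int (a ! i) - int (b ! i)\<bar> + 2 * min (a ! i) (b ! i))"
    by (simp add: dL_def sum.distrib sum_distrib_left)
  also have "\<dots> = (\<Sum>i<?q. a ! i + b ! i)"
    by (rule sum.cong) auto
  also have "\<dots> = sum_list a + sum_list b"
    using assms by (simp add: sum.distrib sum_list_sum_nth atLeast0LessThan)
  finally show ?thesis
    by (simp add: dI_def lcs_len_psi[OF assms] length_psi)
qed

lemma psi_inj:
  assumes "length a = length b" and "psi a = psi b"
  shows "a = b"
proof (rule nth_equalityI)
  fix i assume "i < length a"
  then show "a ! i = b ! i"
    using assms count_list_psi[of i a] count_list_psi[of i b] by simp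
qed (fact assms(1))

lemma min_dI_psi_image:
  assumes "\<And>a. a \<in> A \<Longrightarrow> length a = q"
  shows "min_dI (psi ` A) = min_dL A"
proof -
  have "{dI u v | u v. u \<in> psi ` A \<and> v \<in> psi ` A \<and> u \<noteq> v}
      = {dL a b | a b. a \<in> A \<and> b \<in> A \<and> a \<noteq> b}"
  proof (intro set_eqI iffI)
    fix d assume "d \<in> {dI u v | u v. u \<in> psi ` A \<and> v \<in> psi ` A \<and> u \<noteq> v}"
    then obtain a b where "a \<in> A" "b \<in> A" "psi a \<noteq> psi b" "d = dI (psi a) (psi b)"
      by blast
    then show "d \<in> {dL a b | a b. a \<in> A \<and> b \<in> A \<and> a \<noteq> b}"
      using assms dI_psi by fastforce
  next
    fix d assume "d \<in> {dL a b | a b. a \<in> A \<and> b \<in> A \<and> a \<noteq> b}"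
    then obtain a b where "a \<in> A" "b \<in> A" "a \<noteq> b" "d = dL a b"
      by blast
    moreover have "psi a \<noteq> psi b" and "d = dI (psi a) (psi b)"
      using calculation assms psi_inj dI_psi by metis+
    ultimately show "d \<in> {dI u v | u v. u \<in> psi ` A \<and> v \<in> psi ` A \<and> u \<noteq> v}"
      by blast
  qed
  then show ?thesis
    by (simp add: min_dI_def min_dL_def)
qed

theorem corollary4p2:
  fixes q n M \<delta> :: nat and A :: "nat list set"
  assumes "A \<subseteq> J q n"
    and "card A = M" and "M \<ge> 2"
    and "min_dL A = 2 * \<delta>"
  shows "psi ` A \<subseteq> {w. length w = n \<and> set w \<subseteq> {1..q}} \<and>
         card (psi ` A) = M \<and>
         min_dI (psi ` A) = 2 * \<delta>"
proof (intro conjI)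
  have lengths: "\<And>a. a \<in> A \<Longrightarrow> length a = q" and sums: "\<And>a. a \<in> A \<Longrightarrow> sum_list a = n"
    using assms(1) by (auto simp: J_def)
  show "psi ` A \<subseteq> {w. length w = n \<and> set w \<subseteq> {1..q}}"
  proof (rule image_subsetI)
    fix a assume "a \<in> A"
    then show "psi a \<in> {w. length w = n \<and> set w \<subseteq> {1..q}}"
      using lengths sums set_psi[of a] by (simp add: length_psi)
  qed
  have "inj_on psi A"
    using lengths psi_inj by (metis inj_onI)
  then show "card (psi ` A) = M"
    using assms(2) by (simp add: card_image)
  show "min_dI (psi ` A) = 2 * \<delta>"
    using min_dI_psi_image[OF lengths] assms(4) by simp
qed

end
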